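(* Let $\alpha\in\mathbb{C}$ with $\Re(\alpha)>-1/2$ and $\alpha\neq0$. Then for every $n\in\mathbb{N}_0$, $$p_n(x;\alpha)=\sum_{\nu=0}^{n}\left\{\frac{2^{\nu+1}(\alpha+1/2)_\nu}{\nu!}\sum_{\mu=0}^{\nu}\binom{\nu}{\mu}\frac{(-1)^{\mu}\,\Gamma(2\alpha+\mu)}{\Gamma(2\alpha+\mu+\nu+1)}(\alpha+\mu)^{2n+1}\right\}x^{\nu}.$$
   Context: Let $\mathcal{A}$ be the differential operator $\mathcal{A}f(x)=-x^2f''(x)-xf'(x)+x^2f(x)$ on functions of $x>0$, with iterates $\mathcal{A}^n$ ($\mathcal{A}^0$ = identity). For $\alpha\in\mathbb{C}$, $n\in\mathbb{N}_0$, $p_n(x;\alpha)=(-1)^n e^{x}x^{-\alpha}\,\mathcal{A}^n\big(e^{-x}x^{\alpha}\big)$ (a polynomial in $x$ of degree $n$ when $\Re(\alpha)>-1/2$). $(y)_\nu$ is the Pochhammer symbol, $(y)_0=1$, $(y)_\nu=\prod_{j=0}^{\nu-1}(y+j)$. *)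

theory Defs
  imports "HOL-Analysis.Analysis"
begin

definition Aop :: "(real \<Rightarrow> complex) \<Rightarrow> real \<Rightarrow> complex" where
  "Aop f x =
     - ((complex_of_real x)^2 * vector_derivative (\<lambda>t. vector_derivative f (at t)) (at x))
     - complex_of_real x * vector_derivative f (at x)
     + (complex_of_real x)^2 * f x"

definition p_poly :: "nat \<Rightarrow> complex \<Rightarrow> real \<Rightarrow> complex" where
  "p_poly n \<alpha> x =
     (-1)^n * exp (complex_of_real x) * (complex_of_real x) powr (-\<alpha>) *
     (Aop ^^ n) (\<lambda>t. exp (- complex_of_real t) * (complex_of_real t) powr \<alpha>) x"

end

theory Submission
  imports Defs
begin

text \<open>
  Write e_b(x) = e^{-x} x^b for x > 0.  A direct computation gives
    A e_b = -b^2 e_b + (2b + 1) e_{b+1},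
  so A^n e_\<alpha> is a combination of e_\<alpha>, ..., e_{\<alpha>+n}.  We show
    A^n e_\<alpha> = (-1)^n \<Sum>_{\<nu>\<le>n} c_{2n+1,\<nu>} e_{\<alpha>+\<nu>}
  with the explicit coefficients
    c_{k,\<nu>} = K_\<nu> \<Sum>_{\<mu>\<le>\<nu>} C(\<nu>,\<mu>) (-1)^\<mu> (\<alpha>+\<mu>)^k / (2\<alpha>+\<mu>)_{\<nu>+1},
    K_\<nu> = 2^{\<nu>+1} (\<alpha>+1/2)_\<nu> / \<nu>!.
  The first part of the file is pure algebra: c_{k,\<nu>} obeys the three-term recursion
  c_{k+2,\<nu>} = (\<alpha>+\<nu>)^2 c_{k,\<nu>} - (2\<alpha>+2\<nu>-1) c_{k,\<nu>-1} induced by A, and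
  c_{1,\<nu>} is 1 for \<nu> = 0 and 0 otherwise (a telescoping sum); hence c_{2n+1,\<nu>}
  vanishes for \<nu> > n.
  Multiplying by (-1)^n e^x x^{-\<alpha>} and rewriting 1/(2\<alpha>+\<mu>)_{\<nu>+1} as a quotient of
  Gamma values gives the theorem.  The hypotheses Re \<alpha> > -1/2 and \<alpha> \<noteq> 0 are used
  only to ensure that 2\<alpha> is not a non-positive integer.
\<close>

lemma pochhammer_shift_nonzero:
  fixes z :: "'a :: field_char_0"
  assumes "\<And>m::nat. z + of_nat m \<noteq> 0"
  shows "pochhammer (z + of_nat j) n \<noteq> 0"
proof
  assume "pochhammer (z + of_nat j) n = 0"
  then obtain k where "z + of_nat j = - of_nat k" by (auto simp: pochhammer_eq_0_iff)
  then have "z + of_nat (j + k) = 0" by (simp add: add.assoc eq_neg_iff_add_eq_0)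
  with assms show False by blast
qed

lemma of_nat_binomial_absorb_comp:
  "(of_nat (Suc v choose m) :: 'a :: comm_ring_1) * (of_nat (Suc v) - of_nat m)
     = of_nat (Suc v) * of_nat (v choose m)"
proof (cases "m \<le> Suc v")
  case True
  have "(Suc v - m) * (Suc v choose m) = Suc v * (v choose m)"
    using binomial_absorb_comp[of "Suc v" m] by simp
  then have "(of_nat ((Suc v - m) * (Suc v choose m)) :: 'a) = of_nat (Suc v * (v choose m))"
    by (rule arg_cong)
  then show ?thesis by (simp only: of_nat_mult of_nat_diff[OF True] mult.commute)
qed (simp add: binomial_eq_0)

lemma Gamma_quotient:
  fixes z :: complex
  assumes "\<And>m::nat. z + of_nat m \<noteq> 0"
  shows "Gamma z / Gamma (z + of_nat n) = 1 / pochhammer z n"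
proof -
  have "z \<notin> \<int>\<^sub>\<le>\<^sub>0"
  proof
    assume "z \<in> \<int>\<^sub>\<le>\<^sub>0"
    then obtain k where "z = - of_nat k" by (auto elim!: nonpos_Ints_cases')
    with assms[of k] show False by simp
  qed
  then show ?thesis by (simp add: pochhammer_Gamma)
qed

text \<open>The coefficients: the prefactor K_v and the closed form c_{k,v}, written with
  Pochhammer symbols instead of Gamma quotients.\<close>

definition prefactor :: "complex \<Rightarrow> nat \<Rightarrow> complex" where
  "prefactor a v = 2^(v+1) * pochhammer (a + 1/2) v / of_nat (fact v)"

definition coef :: "complex \<Rightarrow> nat \<Rightarrow> nat \<Rightarrow> complex" where
  "coef a k v = prefactor a v *
     (\<Sum>\<mu>=0..v. of_nat (v choose \<mu>) * (-1)^\<mu> / pochhammer (2*a + of_nat \<mu>) (v+1) * (a + of_nat \<mu>)^k)"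

lemma prefactor_Suc:
  "of_nat (Suc v) * prefactor a (Suc v) = (2*a + 2 * of_nat v + 1) * prefactor a v"
proof -
  have n: "(of_nat (Suc v) :: complex) \<noteq> 0" by (simp only: of_nat_eq_0_iff nat.distinct(1))
  have "of_nat (Suc v) * prefactor a (Suc v)
      = of_nat (Suc v) * (2^(v+1) * 2 * (pochhammer (a + 1/2) v * (a + 1/2 + of_nat v))
          / (of_nat (Suc v) * of_nat (fact v)))"
    unfolding prefactor_def pochhammer_Suc fact_Suc of_nat_mult by (simp add: mult.assoc)
  also have "\<dots> = 2^(v+1) * 2 * (pochhammer (a + 1/2) v * (a + 1/2 + of_nat v)) / of_nat (fact v)"
    using n by simp
  also have "\<dots> = (2*a + 2 * of_nat v + 1) * prefactor a v"
    unfolding prefactor_def by (simp add: algebra_simps)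
  finally show ?thesis .
qed

text \<open>One summand of the recursion in the exponent k: the factor
  (a+v+1)^2 - (a+\<mu>)^2 = (v+1-\<mu>)(2a+\<mu>+v+1) cancels the last factor of the Pochhammer
  symbol, and the absorption identity lowers the binomial coefficient.\<close>

lemma coef_rec_summand:
  fixes a :: complex
  assumes nz: "\<And>m::nat. 2*a + of_nat m \<noteq> 0"
  shows "of_nat (Suc v choose \<mu>) * (-1)^\<mu> / pochhammer (2*a + of_nat \<mu>) (Suc v + 1)
           * (a + of_nat \<mu>)^k * ((a + of_nat (Suc v))^2 - (a + of_nat \<mu>)^2)
       = of_nat (Suc v) * (of_nat (v choose \<mu>) * (-1)^\<mu> / pochhammer (2*a + of_nat \<mu>) (v + 1)
           * (a + of_nat \<mu>)^k)"
proof -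
  define w where "w = 2*a + of_nat \<mu> + of_nat (Suc v)"
  have w: "w \<noteq> 0" using nz[of "\<mu> + Suc v"] by (simp add: w_def add_ac)
  have P: "pochhammer (2*a + of_nat \<mu>) (v + 1) \<noteq> 0"
    using pochhammer_shift_nonzero[OF nz, of \<mu>] .
  have p: "pochhammer (2*a + of_nat \<mu>) (Suc v + 1) = pochhammer (2*a + of_nat \<mu>) (v + 1) * w"
    unfolding w_def by (simp add: pochhammer_Suc)
  have d: "(a + of_nat (Suc v))^2 - (a + of_nat \<mu>)^2 = (of_nat (Suc v) - of_nat \<mu>) * w"
    unfolding w_def by (simp add: power2_eq_square algebra_simps)
  have "of_nat (Suc v choose \<mu>) * (-1)^\<mu> / (pochhammer (2*a + of_nat \<mu>) (v + 1) * w)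
          * (a + of_nat \<mu>)^k * ((of_nat (Suc v) - of_nat \<mu>) * w)
      = of_nat (Suc v choose \<mu>) * (of_nat (Suc v) - of_nat \<mu>)
          * ((-1)^\<mu> / pochhammer (2*a + of_nat \<mu>) (v + 1) * (a + of_nat \<mu>)^k)"
    using w P by (simp add: field_simps)
  then show ?thesis
    unfolding p d of_nat_binomial_absorb_comp by (simp add: mult_ac)
qed

text \<open>The recursion in the exponent k: raising k by 2 corresponds to one application
  of the operator.\<close>

lemma coef_rec:
  assumes nz: "\<And>m::nat. 2*a + of_nat m \<noteq> 0"
  shows "coef a (k+2) (Suc v)
       = (a + of_nat (Suc v))^2 * coef a k (Suc v) - (2*a + 2 * of_nat v + 1) * coef a k v"
proof -
  define T where "T \<mu> = of_nat (Suc v choose \<mu>) * (-1)^\<mu> / pochhammer (2*a + of_nat \<mu>) (Suc v + 1)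
    * (a + of_nat \<mu>)^k" for \<mu>
  define S where "S \<mu> = of_nat (v choose \<mu>) * (-1)^\<mu> / pochhammer (2*a + of_nat \<mu>) (v + 1)
    * (a + of_nat \<mu>)^k" for \<mu>
  have summand: "T \<mu> * ((a + of_nat (Suc v))^2 - (a + of_nat \<mu>)^2) = of_nat (Suc v) * S \<mu>" for \<mu>
    unfolding T_def S_def by (rule coef_rec_summand[OF nz])
  have "(a + of_nat (Suc v))^2 * coef a k (Suc v) - coef a (k+2) (Suc v)
      = prefactor a (Suc v) * (\<Sum>\<mu>=0..Suc v. T \<mu> * ((a + of_nat (Suc v))^2 - (a + of_nat \<mu>)^2))"
  proof -
    define I where "I = {0..Suc v}"
    have "coef a (k+2) (Suc v) = prefactor a (Suc v) * (\<Sum>\<mu>\<in>I. T \<mu> * (a + of_nat \<mu>)^2)"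
      unfolding coef_def T_def I_def by (simp add: power_add power2_eq_square mult_ac)
    moreover have "coef a k (Suc v) = prefactor a (Suc v) * (\<Sum>\<mu>\<in>I. T \<mu>)"
      unfolding coef_def T_def I_def ..
    ultimately show ?thesis
      unfolding I_def[symmetric]
      by (simp add: sum_distrib_left sum_distrib_right right_diff_distrib sum_subtractf mult_ac)
  qed
  also have "\<dots> = of_nat (Suc v) * prefactor a (Suc v) * (\<Sum>\<mu>=0..v. S \<mu>)"
  proof -
    have "S (Suc v) = 0" by (simp add: S_def)
    then show ?thesis unfolding summand by (simp add: sum_distrib_left mult_ac)
  qed
  also have "\<dots> = (2*a + 2 * of_nat v + 1) * coef a k v"
    unfolding prefactor_Suc coef_def S_def by (simp add: mult.assoc)
  finally show ?thesis by (simp add: algebra_simps)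
qed

text \<open>The telescoping terms t_\<mu> for c_{1,v+1}: the \<mu>-th summand of
  c_{1,v+1} equals t_0 for \<mu> = 0 and t_\<mu> - t_{\<mu>-1} for \<mu> > 0, and t_{v+1} = 0.\<close>

definition telescope_term :: "complex \<Rightarrow> nat \<Rightarrow> nat \<Rightarrow> complex" where
  "telescope_term a v \<mu> = (-1)^\<mu> * of_nat (v choose \<mu>) / (2 * pochhammer (2*a + of_nat (Suc \<mu>)) (Suc v))"

text \<open>The summand identity for \<mu> = m + 1.  With u = 2a + \<mu>, it reduces to the numerator
  identity C(v+1,\<mu>) (u + \<mu>) = C(v,\<mu>) u + C(v,m) (u + v + 1), which follows from Pascal's
  rule and \<mu> C(v+1,\<mu>) = (v+1) C(v,m).\<close>

lemma coef_one_summand_Suc: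
  fixes a :: complex
  assumes nz: "\<And>m::nat. 2*a + of_nat m \<noteq> 0"
  shows "of_nat (Suc v choose Suc m) * (-1)^Suc m / pochhammer (2*a + of_nat (Suc m)) (Suc v + 1)
           * (a + of_nat (Suc m))
       = telescope_term a v (Suc m) - telescope_term a v m"
proof -
  define \<mu> where "\<mu> = Suc m"
  define u where "u = 2*a + of_nat \<mu>"
  define n where "n = (of_nat (Suc v) :: complex)"
  define Q1 where "Q1 = pochhammer (u + 1) (Suc v)"
  define Q0 where "Q0 = pochhammer u (Suc v)"
  have u: "u \<noteq> 0" using nz[of \<mu>] by (simp add: u_def)
  have un: "u + n \<noteq> 0" using nz[of "\<mu> + Suc v"] by (simp add: u_def n_def add_ac)
  have Q1: "Q1 \<noteq> 0" using pochhammer_shift_nonzero[OF nz, of "Suc \<mu>" "Suc v"]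
    by (simp add: Q1_def u_def add_ac)
  have Q0: "Q0 = u * Q1 / (u + n)"
  proof -
    have "Q0 * (u + n) = u * Q1"
      unfolding Q0_def Q1_def n_def by (metis pochhammer_Suc pochhammer_rec)
    with un show ?thesis by (simp add: field_simps)
  qed
  have numerator: "of_nat (Suc v choose \<mu>) * (2 * (a + of_nat \<mu>))
      = of_nat (v choose \<mu>) * u + of_nat (v choose m) * (u + n)"
  proof -
    have pascal: "(of_nat (Suc v choose \<mu>) :: complex) = of_nat (v choose m) + of_nat (v choose \<mu>)"
      by (simp add: \<mu>_def)
    have absorb: "(of_nat (Suc v choose \<mu>) :: complex) * of_nat \<mu> = n * of_nat (v choose m)"
      unfolding n_def \<mu>_def of_nat_mult[symmetric] by (metis Suc_times_binomial mult.commute)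
    have "of_nat (Suc v choose \<mu>) * (2 * (a + of_nat \<mu>))
        = of_nat (Suc v choose \<mu>) * u + of_nat (Suc v choose \<mu>) * of_nat \<mu>"
      by (simp add: u_def algebra_simps)
    then show ?thesis unfolding absorb by (simp add: pascal algebra_simps)
  qed
  have "telescope_term a v \<mu> - telescope_term a v m
      = (-1)^\<mu> * (of_nat (v choose \<mu>) / (2 * Q1) + of_nat (v choose m) / (2 * Q0))"
    unfolding telescope_term_def Q0_def Q1_def u_def \<mu>_def by (simp add: algebra_simps)
  also have "\<dots> = (-1)^\<mu> * (of_nat (v choose \<mu>) * u + of_nat (v choose m) * (u + n)) / (2 * (u * Q1))"
    unfolding Q0 using u un Q1 by (simp add: field_simps)
  also have "\<dots> = of_nat (Suc v choose \<mu>) * (-1)^\<mu> / (u * Q1) * (a + of_nat \<mu>)"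
    unfolding numerator[symmetric] using u Q1 by (simp add: field_simps)
  also have "\<dots> = of_nat (Suc v choose \<mu>) * (-1)^\<mu> / pochhammer (2*a + of_nat \<mu>) (Suc v + 1)
      * (a + of_nat \<mu>)"
    unfolding Q1_def u_def by (simp add: pochhammer_rec)
  finally show ?thesis unfolding \<mu>_def ..
qed

text \<open>c_{1,v+1} = 0, since its summands telescope.\<close>

lemma coef_one_Suc:
  assumes nz: "\<And>m::nat. 2*a + of_nat m \<noteq> 0"
  shows "coef a 1 (Suc v) = 0"
proof -
  define V where "V \<mu> = (if \<mu> = 0 then 0 else telescope_term a v (\<mu> - 1))" for \<mu>
  have telescope: "of_nat (Suc v choose \<mu>) * (-1)^\<mu> / pochhammer (2*a + of_nat \<mu>) (Suc v + 1)
      * (a + of_nat \<mu>)^1 = V (Suc \<mu>) - V \<mu>" for \<mu>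
  proof (cases \<mu>)
    case 0
    have "a \<noteq> 0" using nz[of 0] by simp
    moreover have "pochhammer (2*a + 1) (Suc v) \<noteq> 0"
      using pochhammer_shift_nonzero[OF nz, of 1] by simp
    ultimately show ?thesis
      using 0 by (simp add: V_def telescope_term_def pochhammer_rec[of _ "Suc v"] field_simps)
  next
    case (Suc m)
    then show ?thesis using coef_one_summand_Suc[OF nz, of v m] by (simp add: V_def)
  qed
  have "coef a 1 (Suc v) = prefactor a (Suc v) * (\<Sum>\<mu>=0..Suc v. V (Suc \<mu>) - V \<mu>)"
    unfolding coef_def telescope by simp
  also have "\<dots> = prefactor a (Suc v) * (V (Suc (Suc v)) - V 0)"
    by (subst sum_Suc_diff) simp_all
  also have "\<dots> = 0" by (simp add: V_def telescope_term_def)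
  finally show ?thesis .
qed

lemma coef_zero_index: "coef a (k+2) 0 = a^2 * coef a k 0"
  unfolding coef_def by (simp add: power_add power2_eq_square field_simps)

lemma coef_one_zero: "a \<noteq> 0 \<Longrightarrow> coef a 1 0 = 1"
  unfolding coef_def prefactor_def by simp

text \<open>The recursion in the uniform shape produced by the operator.\<close>

lemma coef_step:
  assumes nz: "\<And>m::nat. 2*a + of_nat m \<noteq> 0"
  shows "coef a (k+2) i
       = (a + of_nat i)^2 * coef a k i
         - (if i = 0 then 0 else (2*a + 2 * of_nat i - 1) * coef a k (i - 1))"
proof (cases i)
  case 0
  then show ?thesis using coef_zero_index[of a k] by simp
next
  case (Suc j)
  then show ?thesis using coef_rec[OF nz, of k j] by (simp add: algebra_simps)
qed

lemma coef_vanish: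
  assumes nz: "\<And>m::nat. 2*a + of_nat m \<noteq> 0"
  shows "n < v \<Longrightarrow> coef a (2*n+1) v = 0"
proof (induction n arbitrary: v)
  case 0
  then obtain w where "v = Suc w" by (cases v) auto
  then show ?case using coef_one_Suc[OF nz] by simp
next
  case (Suc n)
  then obtain w where w: "v = Suc w" "n < w" by (cases v) auto
  have "coef a (2*n+1+2) (Suc w)
      = (a + of_nat (Suc w))^2 * coef a (2*n+1) (Suc w) - (2*a + 2 * of_nat w + 1) * coef a (2*n+1) w"
    by (rule coef_rec[OF nz])
  also have "\<dots> = 0" using Suc.IH[of w] Suc.IH[of "Suc w"] w by simp
  finally show ?case using w by (simp add: algebra_simps)
qed

lemma coef_Gamma:
  assumes nz: "\<And>m::nat. 2*a + of_nat m \<noteq> 0"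
  shows "coef a k v = 2^(v+1) * pochhammer (a + 1/2) v / of_nat (fact v) *
        (\<Sum>\<mu>=0..v. of_nat (v choose \<mu>) * (-1)^\<mu> * Gamma (2*a + of_nat \<mu>)
            / Gamma (2*a + of_nat \<mu> + of_nat v + 1) * (a + of_nat \<mu>)^k)"
proof -
  have quotient: "Gamma (2*a + of_nat \<mu>) / Gamma (2*a + of_nat \<mu> + of_nat v + 1)
      = 1 / pochhammer (2*a + of_nat \<mu>) (v + 1)" for \<mu>
  proof -
    have "\<And>m. 2*a + of_nat \<mu> + of_nat m \<noteq> 0"
      using nz by (metis add.assoc of_nat_add)
    from Gamma_quotient[OF this, of "v + 1"] show ?thesis by (simp add: add_ac)
  qed
  show ?thesis
    unfolding coef_def prefactor_def
    by (intro arg_cong[where f = "\<lambda>s. _ * s"] sum.cong refl)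
       (simp only: times_divide_eq_right[symmetric] mult.assoc quotient, simp)
qed

definition emon :: "complex \<Rightarrow> real \<Rightarrow> complex" where
  "emon b t = exp (- complex_of_real t) * complex_of_real t powr b"

lemma emon_shift: "t > 0 \<Longrightarrow> emon (b + of_nat k) t = complex_of_real t ^ k * emon b t"
  unfolding emon_def by (simp add: powr_add powr_nat')

lemma emon_cancel:
  assumes "x > 0"
  shows "exp (complex_of_real x) * complex_of_real x powr (-b) * emon b x = 1"
  using assms by (simp add: emon_def powr_minus exp_minus field_simps)

lemma emon_deriv:
  assumes "t > 0"
  shows "(emon b has_vector_derivative (b * emon (b - 1) t - emon b t)) (at t)"
proof -
  have t: "complex_of_real t \<notin> \<real>\<^sub>\<le>\<^sub>0" using assms by (simp add: complex_nonpos_Reals_iff)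
  have "((\<lambda>z. exp (- z) * z powr b) has_field_derivative
      (- exp (- complex_of_real t) * complex_of_real t powr b
       + exp (- complex_of_real t) * (b * complex_of_real t powr (b - 1)))) (at (complex_of_real t))"
    using assms by (auto intro!: derivative_eq_intros has_field_derivative_powr[OF t])
  from has_vector_derivative_real_field[OF this] show ?thesis
    unfolding emon_def[abs_def] by (simp add: algebra_simps)
qed

lemma vector_derivative_eq_on_pos:
  assumes "\<And>s. s > 0 \<Longrightarrow> g s = h s"
    and "\<And>s. s > 0 \<Longrightarrow> (h has_vector_derivative h' s) (at s)"
    and "t > 0"
  shows "vector_derivative g (at t) = h' t"
proof -
  have "(g has_vector_derivative h' t) (at t)"
    by (rule has_vector_derivative_transform_within_open[OF assms(2)[OF assms(3)], of "{0<..}"])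
       (use assms in auto)
  then show ?thesis by (rule vector_derivative_at)
qed

text \<open>The pointwise algebra behind A e_b = -b^2 e_b + (2b+1) e_{b+1}: the first and
  second derivatives of e_b are combinations of e_{b-2}, e_{b-1}, e_b, and each e_{b+j}
  is t^{j+2} e_{b-2}.\<close>

lemma Aop_emon_term:
  assumes t: "t > 0"
  shows "- (complex_of_real t ^ 2 * (c * (b * ((b - 1) * emon (b - 1 - 1) t - emon (b - 1) t)
            - (b * emon (b - 1) t - emon b t))))
         - complex_of_real t * (c * (b * emon (b - 1) t - emon b t))
         + complex_of_real t ^ 2 * (c * emon b t)
       = c * (- (b ^ 2) * emon b t + (2 * b + 1) * emon (b + 1) t)"
proof -
  define B where "B = b - 2"
  have shift: "emon (b - 2 + of_nat k) t = complex_of_real t ^ k * emon B t" for k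
    using emon_shift[OF t, of B k] unfolding B_def .
  have e0: "emon (b - 1 - 1) t = emon B t" unfolding B_def by (simp add: algebra_simps)
  have e1: "emon (b - 1) t = complex_of_real t * emon B t" using shift[of 1] by simp
  have e2: "emon b t = complex_of_real t ^ 2 * emon B t" using shift[of 2] by simp
  have e3: "emon (b + 1) t = complex_of_real t ^ 3 * emon B t"
    using shift[of 3] by (simp add: add.commute)
  show ?thesis unfolding e0 e1 e2 e3 by (simp add: algebra_simps power2_eq_square power3_eq_cube)
qed

lemma Aop_emon_sum:
  assumes g: "\<And>s. s > 0 \<Longrightarrow> g s = (\<Sum>i\<in>A. c i * emon (b i) s)" and t: "t > 0"
  shows "Aop g t = (\<Sum>i\<in>A. c i * (- (b i ^ 2) * emon (b i) t + (2 * b i + 1) * emon (b i + 1) t))"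
proof -
  have d1: "vector_derivative g (at s) = (\<Sum>i\<in>A. c i * (b i * emon (b i - 1) s - emon (b i) s))"
    if "s > 0" for s
    by (rule vector_derivative_eq_on_pos[OF g _ that])
       (auto intro!: has_vector_derivative_sum has_vector_derivative_mult_right emon_deriv)
  have d2: "vector_derivative (\<lambda>s. vector_derivative g (at s)) (at t) =
     (\<Sum>i\<in>A. c i * (b i * ((b i - 1) * emon (b i - 1 - 1) t - emon (b i - 1) t)
                     - (b i * emon (b i - 1) t - emon (b i) t)))"
    by (rule vector_derivative_eq_on_pos[OF d1 _ t])
       (assumption, intro has_vector_derivative_sum has_vector_derivative_mult_right
          has_vector_derivative_diff emon_deriv, assumption+)
  have "Aop g t = (\<Sum>i\<in>A. - (complex_of_real t ^ 2 * (c i * (b i * ((b i - 1) * emon (b i - 1 - 1) t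
          - emon (b i - 1) t) - (b i * emon (b i - 1) t - emon (b i) t))))
       - complex_of_real t * (c i * (b i * emon (b i - 1) t - emon (b i) t))
       + complex_of_real t ^ 2 * (c i * emon (b i) t))"
    unfolding Aop_def d2 g[OF t] d1[OF t]
    by (simp only: sum_distrib_left sum_subtractf sum.distrib sum_negf)
  then show ?thesis unfolding Aop_emon_term[OF t] .
qed

text \<open>The same for the exponents a, a+1, ..., a+n, reindexed so that the new
  coefficient of e_{a+i} is read off directly.\<close>

lemma Aop_emon_shift_sum:
  assumes g: "\<And>s. s > 0 \<Longrightarrow> g s = (\<Sum>i\<le>n. d i * emon (a + of_nat i) s)"
    and supp: "d (Suc n) = 0" and t: "t > 0"
  shows "Aop g t = (\<Sum>i\<le>Suc n. ((if i = 0 then 0 else (2*a + 2 * of_nat i - 1) * d (i - 1))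
            - (a + of_nat i)^2 * d i) * emon (a + of_nat i) t)"
    (is "_ = (\<Sum>i\<le>Suc n. ?f i)")
proof -
  define X where "X i = - ((a + of_nat i)^2 * d i * emon (a + of_nat i) t)" for i
  define Y where "Y i = (2*a + 2 * of_nat i + 1) * d i * emon (a + of_nat (Suc i)) t" for i
  have "Aop g t = (\<Sum>i\<le>n. d i * (- ((a + of_nat i)^2) * emon (a + of_nat i) t
                     + (2 * (a + of_nat i) + 1) * emon (a + of_nat i + 1) t))"
    by (rule Aop_emon_sum[OF g t])
  also have "\<dots> = (\<Sum>i\<le>n. X i) + (\<Sum>i\<le>n. Y i)"
    unfolding X_def Y_def sum.distrib[symmetric] by (rule sum.cong) (simp_all add: algebra_simps)
  also have "(\<Sum>i\<le>n. X i) = (\<Sum>i\<le>Suc n. X i)"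
    using supp by (simp add: X_def)
  also have "\<dots> = X 0 + (\<Sum>i\<le>n. X (Suc i))"
    by (rule sum.atMost_Suc_shift)
  also have "X 0 + (\<Sum>i\<le>n. X (Suc i)) + (\<Sum>i\<le>n. Y i) = ?f 0 + (\<Sum>i\<le>n. ?f (Suc i))"
  proof -
    have "X (Suc i) + Y i = ?f (Suc i)" for i
      by (simp add: X_def Y_def algebra_simps)
    then show ?thesis by (simp add: X_def sum.distrib[symmetric])
  qed
  also have "\<dots> = (\<Sum>i\<le>Suc n. ?f i)"
    by (rule sum.atMost_Suc_shift[symmetric])
  finally show ?thesis .
qed

lemma Aop_power_emon:
  assumes nz: "\<And>m::nat. 2*a + of_nat m \<noteq> 0" and "t > 0"
  shows "(Aop ^^ n) (emon a) t = (\<Sum>i\<le>n. (-1)^n * coef a (2*n+1) i * emon (a + of_nat i) t)"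
  using \<open>t > 0\<close>
proof (induction n arbitrary: t)
  case 0
  have "a \<noteq> 0" using nz[of 0] by simp
  then show ?case using coef_one_zero[of a] by simp
next
  case (Suc n)
  have "(Aop ^^ Suc n) (emon a) t = Aop ((Aop ^^ n) (emon a)) t" by simp
  also have "\<dots> = (\<Sum>i\<le>Suc n.
      ((if i = 0 then 0 else (2*a + 2 * of_nat i - 1) * ((-1)^n * coef a (2*n+1) (i - 1)))
       - (a + of_nat i)^2 * ((-1)^n * coef a (2*n+1) i)) * emon (a + of_nat i) t)"
    by (rule Aop_emon_shift_sum[OF Suc.IH _ Suc.prems]) (use coef_vanish[OF nz, of n "Suc n"] in simp_all)
  also have "\<dots> = (\<Sum>i\<le>Suc n. (-1)^Suc n * coef a (2*n+1+2) i * emon (a + of_nat i) t)"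
    unfolding coef_step[OF nz, of "2*n+1"] by (intro sum.cong refl) (auto simp: algebra_simps)
  also have "2*n+1+2 = 2 * Suc n + 1" by simp
  finally show ?case .
qed

lemma shift_nonzero_of_Re:
  fixes \<alpha> :: complex
  assumes "Re \<alpha> > -1/2" and "\<alpha> \<noteq> 0"
  shows "2*\<alpha> + of_nat m \<noteq> 0"
proof (cases m)
  case (Suc k)
  then have pos: "Re (2*\<alpha> + of_nat m) > 0" using assms(1) by simp
  show ?thesis
  proof
    assume "2*\<alpha> + of_nat m = 0"
    then have "Re (2*\<alpha> + of_nat m) = 0" by (simp only: zero_complex.sel)
    with pos show False by linarith
  qed
qed (use assms(2) in simp)

theorem lemma2p2:
  fixes \<alpha> :: complex and n :: nat and x :: real
  assumes "Re \<alpha> > -1/2" and "\<alpha> \<noteq> 0" and "x > 0"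
  shows "p_poly n \<alpha> x =
    (\<Sum>\<nu>=0..n.
       (2^(\<nu>+1) * pochhammer (\<alpha> + 1/2) \<nu> / of_nat (fact \<nu>) *
        (\<Sum>\<mu>=0..\<nu>. of_nat (\<nu> choose \<mu>) * (-1)^\<mu> * Gamma (2*\<alpha> + of_nat \<mu>)
            / Gamma (2*\<alpha> + of_nat \<mu> + of_nat \<nu> + 1) * (\<alpha> + of_nat \<mu>)^(2*n+1)))
       * (complex_of_real x)^\<nu>)"
proof -
  have nz: "\<And>m::nat. 2*\<alpha> + of_nat m \<noteq> 0" by (rule shift_nonzero_of_Re[OF assms(1,2)])
  have weight: "(\<lambda>t. exp (- complex_of_real t) * complex_of_real t powr \<alpha>) = emon \<alpha>"
    by (simp add: emon_def fun_eq_iff)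
  have "p_poly n \<alpha> x = (-1)^n * exp (complex_of_real x) * complex_of_real x powr (-\<alpha>)
      * (\<Sum>i\<le>n. (-1)^n * coef \<alpha> (2*n+1) i * (complex_of_real x ^ i * emon \<alpha> x))"
    unfolding p_poly_def weight Aop_power_emon[OF nz assms(3)] emon_shift[OF assms(3)] ..
  also have "\<dots> = (\<Sum>i\<le>n. coef \<alpha> (2*n+1) i * complex_of_real x ^ i) * ((-1)^n * (-1)^n)
      * (exp (complex_of_real x) * complex_of_real x powr (-\<alpha>) * emon \<alpha> x)"
    by (simp add: sum_distrib_left sum_distrib_right mult_ac)
  also have "\<dots> = (\<Sum>i=0..n. coef \<alpha> (2*n+1) i * complex_of_real x ^ i)"
    by (simp add: emon_cancel[OF assms(3)] power_mult_distrib[symmetric] atMost_atLeast0)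
  finally show ?thesis unfolding coef_Gamma[OF nz] .
qed

end
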